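(* Let $H$ be a Banach space and $S(t):H\to H$, $t\ge0$, a semigroup ($S(t+l)=S(t)\circ S(l)$, $S(0)=\mathrm{Id}$) which is dissipative and possesses a global attractor $\mathcal{A}$ in $H$. Assume that every trajectory $u(t)=S(t)u_0$ belongs to $C_{loc}(\mathbb{R}_+,H)$ and that the map $u_0\mapsto S(\cdot)u_0$ is continuous from $H$ to $C_{loc}(\mathbb{R}_+,H)$. Then every system $\{F_1,\dots,F_N\}$ of continuous functionals $F_i:H\to\mathbb{R}$ which is separating on the attractor $\mathcal{A}$ is asymptotically determining.
   Context: Dissipative means: there exist constants $C,\alpha>0$ and a monotone increasing function $Q$ such that $\|S(t)u_0\|_H\le Q(\|u_0\|_H)e^{-\alpha t}+C$ for all $u_0\in H$, $t\ge0$. A set $\mathcal{A}\subset H$ is a global attractor if it is compact, strictly invariant ($S(t)\mathcal{A}=\mathcal{A}$ for all $t\ge0$), and for every bounded $B\subset H$ and every neighbourhood $\mathcal{O}$ of $\mathcal{A}$ there is $T$ with $S(t)B\subset\mathcal{O}$ for $t\ge T$. A complete trajectory belonging to the attractor is a map $u:\mathbb{R}\to\mathcal{A}$ with $S(t)u(s)=u(t+s)$ for all $s\in\mathbb{R}$, $t\ge0$. A system $\{F_1,\dots,F_N\}$ is separating on $\mathcal{A}$ if for any two complete trajectories $u,v$ belonging to $\mathcal{A}$, $F_i(u(t))=F_i(v(t))$ for all $t\in\mathbb{R}$ and all $i$ implies $u\equiv v$. It is asymptotically determining if for any two trajectories $u(t)=S(t)u_0$, $v(t)=S(t)v_0$,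 $\lim_{t\to\infty}(F_i(u(t))-F_i(v(t)))=0$ for all $i$ implies $\lim_{t\to\infty}\|u(t)-v(t)\|_H=0$. *)

theory Defs
  imports "HOL-Analysis.Analysis"
begin

definition is_semigroup :: "(real \<Rightarrow> 'a \<Rightarrow> 'a) \<Rightarrow> bool" where
  "is_semigroup S \<longleftrightarrow> S 0 = id \<and>
     (\<forall>t l. t \<ge> 0 \<longrightarrow> l \<ge> 0 \<longrightarrow> S (t + l) = S t \<circ> S l)"

definition dissipative :: "(real \<Rightarrow> 'a::real_normed_vector \<Rightarrow> 'a) \<Rightarrow> bool" where
  "dissipative S \<longleftrightarrow> (\<exists>C \<alpha> (Q::real \<Rightarrow> real). C > 0 \<and> \<alpha> > 0 \<and> mono Q \<and>
     (\<forall>u0 t. t \<ge> 0 \<longrightarrow> norm (S t u0) \<le> Q (norm u0) * exp (- \<alpha> * t) + C))"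

definition global_attractor :: "(real \<Rightarrow> 'a::metric_space \<Rightarrow> 'a) \<Rightarrow> 'a set \<Rightarrow> bool" where
  "global_attractor S A \<longleftrightarrow> compact A \<and> (\<forall>t\<ge>0. S t ` A = A) \<and>
     (\<forall>B U. bounded B \<longrightarrow> open U \<longrightarrow> A \<subseteq> U \<longrightarrow>
        (\<exists>T. \<forall>t\<ge>T. S t ` B \<subseteq> U))"

definition trajectories_continuous :: "(real \<Rightarrow> 'a::metric_space \<Rightarrow> 'a) \<Rightarrow> bool" where
  "trajectories_continuous S \<longleftrightarrow> (\<forall>u0. continuous_on {0..} (\<lambda>t. S t u0))"

text \<open>Continuity of u0 \<mapsto> S(.)u0 from H into C_loc(R_+,H) (topology of uniform
  convergence on compact subsets of R_+, i.e. on every [0,T]).\<close>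
definition continuous_into_Cloc :: "(real \<Rightarrow> 'a::metric_space \<Rightarrow> 'a) \<Rightarrow> bool" where
  "continuous_into_Cloc S \<longleftrightarrow> (\<forall>u0 T \<epsilon>. \<epsilon> > 0 \<longrightarrow> (\<exists>\<delta>>0. \<forall>v0. dist v0 u0 < \<delta> \<longrightarrow>
      (\<forall>t\<in>{0..T}. dist (S t v0) (S t u0) < \<epsilon>)))"

definition complete_trajectory_in :: "(real \<Rightarrow> 'a \<Rightarrow> 'a) \<Rightarrow> 'a set \<Rightarrow> (real \<Rightarrow> 'a) \<Rightarrow> bool" where
  "complete_trajectory_in S A u \<longleftrightarrow> (\<forall>s. u s \<in> A) \<and>
     (\<forall>s t. t \<ge> 0 \<longrightarrow> S t (u s) = u (t + s))"

text \<open>The system F_1..F_N is indexed here by i < N.\<close>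
definition separating_on :: "(real \<Rightarrow> 'a \<Rightarrow> 'a) \<Rightarrow> 'a set \<Rightarrow> nat \<Rightarrow> (nat \<Rightarrow> 'a \<Rightarrow> real) \<Rightarrow> bool" where
  "separating_on S A N F \<longleftrightarrow> (\<forall>u v. complete_trajectory_in S A u \<longrightarrow> complete_trajectory_in S A v \<longrightarrow>
     (\<forall>t. \<forall>i<N. F i (u t) = F i (v t)) \<longrightarrow> u = v)"

definition asymptotically_determining :: "(real \<Rightarrow> 'a::real_normed_vector \<Rightarrow> 'a) \<Rightarrow> nat \<Rightarrow> (nat \<Rightarrow> 'a \<Rightarrow> real) \<Rightarrow> bool" where
  "asymptotically_determining S N F \<longleftrightarrow> (\<forall>u0 v0.
     (\<forall>i<N. ((\<lambda>t. F i (S t u0) - F i (S t v0)) \<longlongrightarrow> 0) at_top) \<longrightarrow>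
     ((\<lambda>t. norm (S t u0 - S t v0)) \<longlongrightarrow> 0) at_top)"

end

theory Submission
  imports Defs "HOL-Library.Diagonal_Subsequence"
begin

text \<open>If the differences F i (S t u0) - F i (S t v0) tend to zero but
  norm (S t u0 - S t v0) does not, pick times t n \<rightarrow> \<infinity> at which it stays \<ge> \<epsilon>. Compactness
  of the attractor and a diagonal argument over the backward times t n - k give a subsequence
  along which S (t n + s) u0 and S (t n + s) v0 converge for every real s; continuity of each
  S \<tau> makes the limits complete trajectories U, V in the attractor. Continuity of the F i gives
  F i \<circ> U = F i \<circ> V, hence U = V by separation, contradicting norm (U 0 - V 0) \<ge> \<epsilon>.\<close>

lemma semigroup_apply_add:
  assumes "is_semigroup S" "t \<ge> 0" "l \<ge> 0"
  shows "S (t + l) x = S t (S l x)"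
  using assms unfolding is_semigroup_def by auto

lemma continuous_into_Cloc_isCont:
  assumes "continuous_into_Cloc S" "t \<ge> 0"
  shows "isCont (S t) x"
  unfolding continuous_at_eps_delta
proof (intro allI impI)
  fix e :: real assume "e > 0"
  then obtain d where "d > 0" "\<forall>y. dist y x < d \<longrightarrow> (\<forall>s\<in>{0..t}. dist (S s y) (S s x) < e)"
    using assms(1) unfolding continuous_into_Cloc_def by blast
  then show "\<exists>d>0. \<forall>y. dist y x < d \<longrightarrow> dist (S t y) (S t x) < e"
    using assms(2) by auto
qed

lemma global_attractor_invariant:
  assumes "global_attractor S A" "x \<in> A" "t \<ge> 0"
  shows "S t x \<in> A"
  using assms unfolding global_attractor_def by blast

lemma global_attractor_eventually_near:
  assumes "global_attractor S A" "e > 0"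
  shows "eventually (\<lambda>t. \<exists>a\<in>A. dist (S t x) a < e) at_top"
proof -
  let ?U = "\<Union>a\<in>A. ball a e"
  have "open ?U" "A \<subseteq> ?U" "bounded {x}"
    using assms(2) by auto
  then obtain T where "\<forall>t\<ge>T. S t ` {x} \<subseteq> ?U"
    using assms(1) unfolding global_attractor_def by metis
  then show ?thesis
    unfolding eventually_at_top_linorder by (auto simp: dist_commute)
qed

lemma compact_approached_seq_convergent_subseq:
  fixes x :: "nat \<Rightarrow> 'a::metric_space"
  assumes "compact A"
    and near: "\<And>e. e > 0 \<Longrightarrow> eventually (\<lambda>n. \<exists>a\<in>A. dist (x n) a < e) sequentially"
  shows "\<exists>r l. strict_mono r \<and> l \<in> A \<and> (x \<circ> r) \<longlonglongrightarrow> l"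
proof -
  have "A \<noteq> {}"
    using eventually_happens[OF near[of 1]] by auto
  then have "\<exists>a\<in>A. \<forall>b\<in>A. dist (x n) a \<le> dist (x n) b" for n
    by (rule continuous_attains_inf[OF \<open>compact A\<close>]) (intro continuous_intros)
  then obtain a where a: "\<And>n. a n \<in> A" "\<And>n b. b \<in> A \<Longrightarrow> dist (x n) (a n) \<le> dist (x n) b"
    by metis
  have nearest: "(\<lambda>n. dist (x n) (a n)) \<longlonglongrightarrow> 0"
  proof (rule tendstoI)
    fix e :: real assume "e > 0"
    show "eventually (\<lambda>n. dist (dist (x n) (a n)) 0 < e) sequentially"
      using near[OF \<open>e > 0\<close>] by eventually_elim (simp, meson a(2) le_less_trans)
  qed
  obtain r l where "l \<in> A" "strict_mono r" "(a \<circ> r) \<longlonglongrightarrow> l"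
    using \<open>compact A\<close> a(1) unfolding compact_eq_seq_compact_metric seq_compact_def by metis
  moreover have "(x \<circ> r) \<longlonglongrightarrow> l"
  proof (rule tendsto_dist_iff[THEN iffD2], rule tendsto_sandwich[OF _ _ tendsto_const])
    show "eventually (\<lambda>n. 0 \<le> dist ((x \<circ> r) n) l) sequentially"
      by simp
    show "eventually (\<lambda>n. dist ((x \<circ> r) n) l \<le> dist (x (r n)) (a (r n)) + dist (a (r n)) l) sequentially"
      by (simp add: dist_triangle)
    show "(\<lambda>n. dist (x (r n)) (a (r n)) + dist (a (r n)) l) \<longlonglongrightarrow> 0"
      using tendsto_add[OF LIMSEQ_subseq_LIMSEQ[OF nearest \<open>strict_mono r\<close>]
          tendsto_dist_iff[THEN iffD1, OF \<open>(a \<circ> r) \<longlonglongrightarrow> l\<close>]]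
      by (simp add: o_def)
  qed
  ultimately show ?thesis by blast
qed

lemma global_attractor_convergent_subseq:
  assumes "global_attractor S A" "filterlim t at_top sequentially"
  shows "\<exists>r l. strict_mono r \<and> l \<in> A \<and> (\<lambda>n. S (t (r n)) x) \<longlonglongrightarrow> l"
proof -
  have "compact A" using assms(1) unfolding global_attractor_def by blast
  then show ?thesis
    using compact_approached_seq_convergent_subseq[of A "\<lambda>n. S (t n) x"]
      filterlim_iff[THEN iffD1, OF assms(2), rule_format,
        OF global_attractor_eventually_near[OF assms(1)]]
    by (simp add: o_def)
qed

lemma filterlim_subseq_add_at_top:
  fixes t :: "nat \<Rightarrow> real"
  assumes "filterlim t at_top sequentially" "strict_mono r"
  shows "filterlim (\<lambda>n. t (r n) + c) at_top sequentially"
  using filterlim_tendsto_add_at_top[OF tendsto_const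
      filterlim_compose[OF assms(1) filterlim_subseq[OF assms(2)]]]
  by (simp add: add.commute)

lemma global_attractor_diagonal_subseq:
  fixes t :: "nat \<Rightarrow> real"
  assumes "global_attractor S A" "filterlim t at_top sequentially"
  shows "\<exists>d a. strict_mono d \<and> (\<forall>k. a k \<in> A \<and> (\<lambda>n. S (t (d n) - real k) x) \<longlonglongrightarrow> a k)"
proof -
  define P where "P k r \<longleftrightarrow> (\<exists>a\<in>A. (\<lambda>n. S (t (r n) - real k) x) \<longlonglongrightarrow> a)" for k r
  interpret subseqs P
  proof
    fix k and s :: "nat \<Rightarrow> nat" assume "strict_mono s"
    then obtain r a where "strict_mono r" "a \<in> A" "(\<lambda>n. S (t (s (r n)) + - real k) x) \<longlonglongrightarrow> a"
      using global_attractor_convergent_subseq[OF assms(1)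
          filterlim_subseq_add_at_top[OF assms(2)]] by blast
    then show "\<exists>r. strict_mono r \<and> P k (s \<circ> r)"
      unfolding P_def by auto
  qed
  have "P k diagseq" for k
  proof -
    have "P k (diagseq \<circ> (+) (Suc k))"
      by (rule diagseq_holds) (auto simp: P_def o_def intro: LIMSEQ_subseq_LIMSEQ[unfolded o_def])
    then obtain a where "a \<in> A" "(\<lambda>n. S (t (diagseq (n + Suc k)) - real k) x) \<longlonglongrightarrow> a"
      unfolding P_def by (auto simp: o_def add.commute)
    then show ?thesis
      using LIMSEQ_offset[of "\<lambda>n. S (t (diagseq n) - real k) x" "Suc k"] unfolding P_def by auto
  qed
  then have "\<forall>k. \<exists>a. a \<in> A \<and> (\<lambda>n. S (t (diagseq n) - real k) x) \<longlonglongrightarrow> a"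
    unfolding P_def by blast
  then obtain a where "\<forall>k. a k \<in> A \<and> (\<lambda>n. S (t (diagseq n) - real k) x) \<longlonglongrightarrow> a k"
    by (rule choice[THEN exE])
  with subseq_diagseq show ?thesis
    by blast
qed

lemma semigroup_tendsto_shift:
  assumes "is_semigroup S" "continuous_into_Cloc S"
    and "filterlim t at_top sequentially" "(\<lambda>n. S (t n) x) \<longlonglongrightarrow> a" "\<tau> \<ge> 0"
  shows "(\<lambda>n. S (t n + \<tau>) x) \<longlonglongrightarrow> S \<tau> a"
proof (rule Lim_transform_eventually)
  show "(\<lambda>n. S \<tau> (S (t n) x)) \<longlonglongrightarrow> S \<tau> a"
    by (rule isCont_tendsto_compose[OF continuous_into_Cloc_isCont[OF assms(2,5)] assms(4)])
  have "eventually (\<lambda>n. 0 \<le> t n) sequentially"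
    using assms(3) unfolding filterlim_at_top by blast
  then show "eventually (\<lambda>n. S \<tau> (S (t n) x) = S (t n + \<tau>) x) sequentially"
    by eventually_elim (simp add: semigroup_apply_add[OF assms(1,5), symmetric] add.commute)
qed

text \<open>W s shifts the limit taken at the integer backward time - k forward by s + k,
  for any k \<ge> - s.\<close>

lemma limit_complete_trajectory:
  fixes t :: "nat \<Rightarrow> real"
  assumes sg: "is_semigroup S" and ga: "global_attractor S A" and cl: "continuous_into_Cloc S"
    and t: "filterlim t at_top sequentially"
  shows "\<exists>r W. strict_mono r \<and> complete_trajectory_in S A W \<and>
    (\<forall>s. (\<lambda>n. S (t (r n) + s) x) \<longlonglongrightarrow> W s)"
proof -
  obtain r a where r: "strict_mono r"
    and a: "\<And>k. a k \<in> A" "\<And>k. (\<lambda>n. S (t (r n) - real k) x) \<longlonglongrightarrow> a k"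
    using global_attractor_diagonal_subseq[OF ga t] by metis
  define K where "K s = nat \<lceil>- s\<rceil>" for s :: real
  have K: "s + real (K s) \<ge> 0" for s
    unfolding K_def by linarith
  define W where "W s = S (s + real (K s)) (a (K s))" for s
  have limW: "(\<lambda>n. S (t (r n) + s) x) \<longlonglongrightarrow> W s" for s
  proof -
    have "filterlim (\<lambda>n. t (r n) - real (K s)) at_top sequentially"
      using filterlim_subseq_add_at_top[OF t r, of "- real (K s)"] by simp
    from semigroup_tendsto_shift[OF sg cl this a(2) K[of s]]
    show ?thesis
      unfolding W_def by simp
  qed
  have "S \<tau> (W s) = W (\<tau> + s)" if "\<tau> \<ge> 0" for \<tau> s
  proof (rule LIMSEQ_unique)
    show "(\<lambda>n. S (t (r n) + s + \<tau>) x) \<longlonglongrightarrow> S \<tau> (W s)"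
      by (rule semigroup_tendsto_shift[OF sg cl filterlim_subseq_add_at_top[OF t r] limW that])
    show "(\<lambda>n. S (t (r n) + s + \<tau>) x) \<longlonglongrightarrow> W (\<tau> + s)"
      using limW[of "\<tau> + s"] by (simp add: ac_simps)
  qed
  moreover have "W s \<in> A" for s
    unfolding W_def by (rule global_attractor_invariant[OF ga a(1) K])
  ultimately show ?thesis
    using r limW unfolding complete_trajectory_in_def by blast
qed

lemma not_tendsto_zero_at_top_seq:
  fixes g :: "real \<Rightarrow> 'b::real_normed_vector"
  assumes "\<not> (g \<longlongrightarrow> 0) at_top"
  shows "\<exists>\<epsilon>>0. \<exists>t. filterlim t at_top sequentially \<and> (\<forall>n. \<epsilon> \<le> norm (g (t n)))"
proof -
  obtain \<epsilon> where "\<epsilon> > 0" "\<not> eventually (\<lambda>s. norm (g s) < \<epsilon>) at_top"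
    using assms unfolding tendsto_iff by auto
  then have "\<exists>s\<ge>real n. \<epsilon> \<le> norm (g s)" for n
    unfolding eventually_at_top_linorder by (meson not_le)
  then obtain t where t: "\<And>n. t n \<ge> real n" "\<And>n. \<epsilon> \<le> norm (g (t n))"
    by metis
  have "filterlim t at_top sequentially"
    by (rule filterlim_at_top_mono[OF filterlim_real_sequentially]) (simp add: t(1))
  with \<open>\<epsilon> > 0\<close> t(2) show ?thesis
    by blast
qed

lemma isCont_limits_eq_if_diff_tendsto_zero:
  fixes f :: "'a::metric_space \<Rightarrow> 'b::real_normed_vector"
  assumes "x \<longlonglongrightarrow> a" "y \<longlonglongrightarrow> b" "isCont f a" "isCont f b"
    and "(\<lambda>n. f (x n) - f (y n)) \<longlonglongrightarrow> 0"
  shows "f a = f b"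
proof -
  have "(\<lambda>n. f (x n) - f (y n)) \<longlonglongrightarrow> f a - f b"
    by (intro tendsto_diff isCont_tendsto_compose[OF assms(3,1)] isCont_tendsto_compose[OF assms(4,2)])
  with assms(5) show ?thesis
    using LIMSEQ_unique by fastforce
qed

lemma separating_on_subseq_tendsto_zero:
  fixes S :: "real \<Rightarrow> 'a::real_normed_vector \<Rightarrow> 'a" and F :: "nat \<Rightarrow> 'a \<Rightarrow> real"
  assumes sg: "is_semigroup S" and ga: "global_attractor S A" and cl: "continuous_into_Cloc S"
    and F_cont: "\<forall>i<N. continuous_on UNIV (F i)" and sep: "separating_on S A N F"
    and F_diff: "\<forall>i<N. ((\<lambda>t. F i (S t u0) - F i (S t v0)) \<longlongrightarrow> 0) at_top"
    and t: "filterlim t at_top sequentially"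
  shows "\<exists>d. strict_mono d \<and> (\<lambda>n. S (t (d n)) u0 - S (t (d n)) v0) \<longlonglongrightarrow> 0"
proof -
  obtain r U where r: "strict_mono r" and U: "complete_trajectory_in S A U"
    and limU: "\<And>s. (\<lambda>n. S (t (r n) + s) u0) \<longlonglongrightarrow> U s"
    using limit_complete_trajectory[OF sg ga cl t] by blast
  obtain d V where d: "strict_mono d" and V: "complete_trajectory_in S A V"
    and limV: "\<And>s. (\<lambda>n. S (t (r (d n)) + s) v0) \<longlonglongrightarrow> V s"
    using limit_complete_trajectory[OF sg ga cl filterlim_compose[OF t filterlim_subseq[OF r]]]
    by blast
  have limU': "(\<lambda>n. S (t (r (d n)) + s) u0) \<longlonglongrightarrow> U s" for s
    using LIMSEQ_subseq_LIMSEQ[OF limU d] by (simp add: o_def)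
  have "F i (U s) = F i (V s)" if "i < N" for i s
  proof -
    have "isCont (F i) y" for y
      using F_cont that by (simp add: continuous_on_eq_continuous_at)
    moreover have "(\<lambda>n. F i (S (t (r (d n)) + s) u0) - F i (S (t (r (d n)) + s) v0)) \<longlonglongrightarrow> 0"
      using filterlim_compose[OF F_diff[rule_format, OF that]
          filterlim_subseq_add_at_top[OF t strict_mono_o[OF r d]]] by simp
    ultimately show ?thesis
      using isCont_limits_eq_if_diff_tendsto_zero[OF limU' limV] by blast
  qed
  then have "U = V"
    using sep U V unfolding separating_on_def by blast
  then have "(\<lambda>n. S (t ((r \<circ> d) n)) u0 - S (t ((r \<circ> d) n)) v0) \<longlonglongrightarrow> 0"
    using tendsto_diff[OF limU'[of 0] limV[of 0]] by simp
  with strict_mono_o[OF r d] show ?thesis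
    by blast
qed

theorem proposition2p3:
  fixes S :: "real \<Rightarrow> 'a::banach \<Rightarrow> 'a" and A :: "'a set"
    and N :: nat and F :: "nat \<Rightarrow> 'a \<Rightarrow> real"
  assumes "is_semigroup S"
    and "dissipative S"
    and "global_attractor S A"
    and "trajectories_continuous S"
    and "continuous_into_Cloc S"
    and "\<forall>i<N. continuous_on UNIV (F i)"
    and "separating_on S A N F"
  shows "asymptotically_determining S N F"
  unfolding asymptotically_determining_def
proof (intro allI impI)
  fix u0 v0
  assume F_diff: "\<forall>i<N. ((\<lambda>t. F i (S t u0) - F i (S t v0)) \<longlongrightarrow> 0) at_top"
  show "((\<lambda>t. norm (S t u0 - S t v0)) \<longlongrightarrow> 0) at_top"
  proof (rule ccontr)
    assume "\<not> ?thesis"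
    then obtain \<epsilon> t where "\<epsilon> > 0" and t: "filterlim t at_top sequentially"
      and far: "\<And>n. \<epsilon> \<le> norm (S (t n) u0 - S (t n) v0)"
      using not_tendsto_zero_at_top_seq[of "\<lambda>s. S s u0 - S s v0"]
      by (auto simp: tendsto_norm_zero_iff)
    obtain d where "(\<lambda>n. S (t (d n)) u0 - S (t (d n)) v0) \<longlonglongrightarrow> 0"
      using separating_on_subseq_tendsto_zero[OF assms(1,3,5,6,7) F_diff t] by blast
    then have "(\<lambda>n. norm (S (t (d n)) u0 - S (t (d n)) v0)) \<longlonglongrightarrow> 0"
      by (rule tendsto_norm_zero)
    then have "\<epsilon> \<le> 0"
      by (rule tendsto_lowerbound) (simp_all add: far)
    with \<open>\<epsilon> > 0\<close> show False
      by simp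
  qed
qed

end
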